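(* Let $\omega$ be a non-quasianalytic subadditive weight function, let $u\in\mathcal{S}'_\omega(\mathbb R^d)$, $\varphi\in\mathcal{S}_\omega(\mathbb R^d)\setminus\{0\}$, let $\Lambda=\alpha\mathbb Z^d\times\beta\mathbb Z^d$ with $\alpha,\beta>0$, and let $\Gamma\subseteq\mathbb R^{2d}\setminus\{0\}$ be an open conic set. Then $$\sup_{\sigma\in\Lambda\cap\Gamma}e^{\lambda\omega(\sigma)}|\langle u,\Pi(\sigma)\varphi\rangle|<+\infty\quad\forall\lambda>0$$ holds if and only if $$\sum_{\sigma\in\Lambda\cap\Gamma}e^{\lambda\omega(\sigma)}|\langle u,\Pi(\sigma)\varphi\rangle|^2<+\infty\quad\forall\lambda>0.$$
   Context: A non-quasianalytic subadditive weight function is a continuous increasing function $\omega:[0,+\infty)\to[0,+\infty)$ such that: ($\alpha$) $\omega(t_1+t_2)\le\omega(t_1)+\omega(t_2)$ for all $t_1,t_2\ge0$; ($\beta$) $\int_1^{+\infty}\omega(t)t^{-2}\,dt<+\infty$; ($\gamma$) there exist $a\in\mathbb R$, $b>0$ with $\omega(t)\ge a+b\log(1+t)$ for all $t\ge0$; ($\delta$) $\varphi(t):=\omega(e^t)$ is convex. For $\zeta$ in $\mathbb R^n$ or $\mathbb C^n$ one writes $\omega(\zeta):=\omega(|\zeta|)$ with $|\cdot|$ the Euclidean norm. The space $\mathcal{S}_\omega(\mathbb R^d)$ is the set of Schwartz functions $f$ such that for all $\lambda>0$ and $\alpha\in\mathbb N_0^d$, $\sup_x|D^\alpha f(x)|e^{\lambda\omega(x)}<\infty$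 and $\sup_\xi|D^\alpha\hat f(\xi)|e^{\lambda\omega(\xi)}<\infty$, where $\hat f(\xi)=\int f(x)e^{-ix\cdot\xi}dx$; $\mathcal{S}'_\omega(\mathbb R^d)$ is its strong dual, with the duality $\langle\cdot,\cdot\rangle$ conjugate-linear in the second argument (extending the $L^2$ inner product). For $z=(x,\xi)\in\mathbb R^{2d}$, $\Pi(z)f(t)=e^{it\cdot\xi}f(t-x)$. *)

theory Defs
  imports "HOL-Analysis.Analysis"
begin

definition nq_weight :: "(real \<Rightarrow> real) \<Rightarrow> bool" where
  "nq_weight \<omega> \<longleftrightarrow>
     continuous_on {0..} \<omega> \<and> mono_on {0..} \<omega> \<and> (\<forall>t\<ge>0. \<omega> t \<ge> 0) \<and>
     (\<forall>t1\<ge>0. \<forall>t2\<ge>0. \<omega> (t1 + t2) \<le> \<omega> t1 + \<omega> t2) \<and>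
     set_integrable lborel {1..} (\<lambda>t. \<omega> t / t\<^sup>2) \<and>
     (\<exists>a b. b > 0 \<and> (\<forall>t\<ge>0. \<omega> t \<ge> a + b * ln (1 + t))) \<and>
     convex_on UNIV (\<lambda>t. \<omega> (exp t))"

text \<open>Partial derivative in the i-th coordinate direction, and iterated partial
  derivatives indexed by a list of directions (covers all multi-indices).\<close>
definition pdiff :: "'n::finite \<Rightarrow> (real^'n \<Rightarrow> complex) \<Rightarrow> real^'n \<Rightarrow> complex" where
  "pdiff i f = (\<lambda>x. frechet_derivative f (at x) (axis i 1))"

fun Dlist :: "'n::finite list \<Rightarrow> (real^'n \<Rightarrow> complex) \<Rightarrow> real^'n \<Rightarrow> complex" where
  "Dlist [] f = f"
| "Dlist (i # is) f = pdiff i (Dlist is f)"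

definition smooth_fun :: "(real^'n::finite \<Rightarrow> complex) \<Rightarrow> bool" where
  "smooth_fun f \<longleftrightarrow> (\<forall>is x. Dlist is f differentiable (at x))"

definition schwartz :: "(real^'n::finite \<Rightarrow> complex) \<Rightarrow> bool" where
  "schwartz f \<longleftrightarrow> smooth_fun f \<and>
     (\<forall>is. \<forall>k::nat. bdd_above (range (\<lambda>x. (1 + norm x) ^ k * norm (Dlist is f x))))"

definition fourier :: "(real^'n::finite \<Rightarrow> complex) \<Rightarrow> real^'n \<Rightarrow> complex" where
  "fourier f = (\<lambda>\<xi>. integral\<^sup>L lborel (\<lambda>x. f x * cis (- (x \<bullet> \<xi>))))"

definition S_omega :: "(real \<Rightarrow> real) \<Rightarrow> (real^'n::finite \<Rightarrow> complex) set" where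
  "S_omega \<omega> = {f. schwartz f \<and>
     (\<forall>l>0. \<forall>is.
        bdd_above (range (\<lambda>x. norm (Dlist is f x) * exp (l * \<omega> (norm x)))) \<and>
        bdd_above (range (\<lambda>\<xi>. norm (Dlist is (fourier f) \<xi>) * exp (l * \<omega> (norm \<xi>)))))}"

definition seminorm_S :: "(real \<Rightarrow> real) \<Rightarrow> real \<Rightarrow> 'n::finite list \<Rightarrow> (real^'n \<Rightarrow> complex) \<Rightarrow> real" where
  "seminorm_S \<omega> l is f =
     (SUP x. norm (Dlist is f x) * exp (l * \<omega> (norm x))) +
     (SUP \<xi>. norm (Dlist is (fourier f) \<xi>) * exp (l * \<omega> (norm \<xi>)))"

text \<open>Elements of the dual \<open>S'_\<omega>\<close>: continuous linear functionals on \<open>S_\<omega>\<close>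
  (continuity w.r.t. the Frechet topology given by the seminorms above).\<close>
definition S'_omega :: "(real \<Rightarrow> real) \<Rightarrow> ((real^'n::finite \<Rightarrow> complex) \<Rightarrow> complex) set" where
  "S'_omega \<omega> = {U.
     (\<forall>f\<in>S_omega \<omega>. \<forall>g\<in>S_omega \<omega>. U (\<lambda>x. f x + g x) = U f + U g) \<and>
     (\<forall>f\<in>S_omega \<omega>. \<forall>c. U (\<lambda>x. c * f x) = c * U f) \<and>
     (\<exists>C l N. \<forall>f\<in>S_omega \<omega>.
        norm (U f) \<le> C * (\<Sum>is\<in>{is::'n list. length is \<le> N}. seminorm_S \<omega> l is f))}"

text \<open>Duality extending the L2 inner product: conjugate-linear in the second argument.\<close>
definition dual_pair :: "((real^'n::finite \<Rightarrow> complex) \<Rightarrow> complex) \<Rightarrow> (real^'n \<Rightarrow> complex) \<Rightarrow> complex" where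
  "dual_pair U g = U (\<lambda>x. cnj (g x))"

definition tf_shift :: "(real^'n::finite) \<times> (real^'n) \<Rightarrow> (real^'n \<Rightarrow> complex) \<Rightarrow> real^'n \<Rightarrow> complex" where
  "tf_shift z f = (\<lambda>t. cis (t \<bullet> snd z) * f (t - fst z))"

definition tf_lattice :: "real \<Rightarrow> real \<Rightarrow> ((real^'n::finite) \<times> (real^'n)) set" where
  "tf_lattice a b = {(x, \<xi>). \<forall>i. (\<exists>k::int. x $ i = a * of_int k) \<and> (\<exists>m::int. \<xi> $ i = b * of_int m)}"

definition conic :: "('a::real_vector) set \<Rightarrow> bool" where
  "conic G \<longleftrightarrow> (\<forall>z\<in>G. \<forall>t>0. t *\<^sub>R z \<in> G)"

end

theory Submission
  imports Defs
begin

text \<open>Only condition (\<gamma>) on \<open>\<omega>\<close> and the lattice structure of \<open>\<Lambda>\<close> are used. With \<open>\<kappa> = 4d/b\<close>, condition (\<gamma>) gives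
  \<open>exp (-\<kappa> \<omega>(\<sigma>)) \<le> C (1 + |\<sigma>|)^(-4d)\<close>, and \<open>(1 + |\<sigma>|)^(-4d)\<close> is summable over \<open>\<Lambda>\<close>:
  up to a constant it is bounded by the product of \<open>(1 + |k\<^sub>j|)^(-2)\<close> over the \<open>2d\<close> integer coordinates \<open>k\<close> of \<open>\<sigma>\<close>.
  Hence a bound on \<open>exp (\<mu> \<omega>(\<sigma>)) |\<langle>u, \<Pi>(\<sigma>)\<phi>\<rangle>|\<close> with \<open>\<mu> = (\<lambda> + \<kappa>)/2\<close> makes the weighted
  squares at weight \<open>\<lambda>\<close> summable; conversely, summability at weight \<open>2\<lambda>\<close> bounds every single
  term at weight \<open>\<lambda>\<close>.\<close>

lemma summable_on_inverse_square_int: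
  "(\<lambda>j::int. inverse ((1 + \<bar>real_of_int j\<bar>)^2)) summable_on UNIV"
proof -
  let ?p = "\<lambda>j::int. inverse ((1 + \<bar>real_of_int j\<bar>)^2)"
  have "summable (\<lambda>n. inverse (real n ^ 2))"
    by (rule inverse_power_summable) simp
  then have Suc: "summable (\<lambda>n. inverse (real (Suc n) ^ 2))"
    by (subst summable_Suc_iff)
  have "?p summable_on range f" if "inj f" "\<And>n. \<bar>real_of_int (f n)\<bar> = real n" for f :: "nat \<Rightarrow> int"
  proof -
    have "summable (?p \<circ> f)"
      using Suc by (simp add: o_def that(2) add.commute)
    then have "(?p \<circ> f) summable_on UNIV"
      by (subst summable_on_UNIV_nonneg_real_iff) auto
    then show ?thesis
      using that(1) by (subst summable_on_reindex) (auto intro: inj_on_subset)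
  qed
  then have "?p summable_on range int" "?p summable_on range (\<lambda>n. - int n)"
    by (auto simp: inj_def)
  moreover have "(UNIV::int set) = range int \<union> range (\<lambda>n. - int n)"
    by (auto simp: image_iff) (metis int_cases2)
  ultimately show ?thesis
    by (metis summable_on_union)
qed

lemma summable_on_prod_inverse_square_int_funs:
  "(\<lambda>q::'i::finite \<Rightarrow> int. \<Prod>j\<in>UNIV. inverse ((1 + \<bar>real_of_int (q j)\<bar>)^2)) summable_on UNIV"
proof -
  let ?p = "\<lambda>j::int. inverse ((1 + \<bar>real_of_int j\<bar>)^2)"
  have "Infinite_Sum.abs_summable_on ?p UNIV"
    using summable_on_inverse_square_int by simp
  then have "Infinite_Set_Sum.abs_summable_on ?p UNIV"
    using abs_summable_equivalent by blast
  then have "Infinite_Set_Sum.abs_summable_on (\<lambda>q. \<Prod>j\<in>UNIV. ?p (q j)) (PiE (UNIV::'i set) (\<lambda>_. UNIV))"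
    by (intro abs_summable_on_prod_PiE) auto
  then have "Infinite_Set_Sum.abs_summable_on (\<lambda>q. \<Prod>j\<in>UNIV. ?p (q j)) (UNIV::('i \<Rightarrow> int) set)"
    by simp
  then have "Infinite_Sum.abs_summable_on (\<lambda>q. \<Prod>j\<in>UNIV. ?p (q j)) (UNIV::('i \<Rightarrow> int) set)"
    by (rule abs_summable_equivalent[THEN iffD2])
  moreover have "\<bar>\<Prod>j\<in>UNIV. ?p (q j)\<bar> = (\<Prod>j\<in>UNIV. ?p (q j))" for q :: "'i \<Rightarrow> int"
    by (simp add: prod_nonneg)
  ultimately show ?thesis
    by simp
qed

definition tf_lattice_index :: "real \<Rightarrow> real \<Rightarrow> (real^'n::finite) \<times> (real^'n) \<Rightarrow> 'n + 'n \<Rightarrow> int" where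
  "tf_lattice_index a b \<sigma> = case_sum (\<lambda>i. round (fst \<sigma> $ i / a)) (\<lambda>i. round (snd \<sigma> $ i / b))"

lemma tf_lattice_component_eq_index:
  assumes "a > 0" "b > 0" "\<sigma> \<in> tf_lattice a b"
  shows "fst \<sigma> $ i = a * of_int (tf_lattice_index a b \<sigma> (Inl i))"
    and "snd \<sigma> $ i = b * of_int (tf_lattice_index a b \<sigma> (Inr i))"
proof -
  obtain x \<xi> where \<sigma>: "\<sigma> = (x, \<xi>)"
    by fastforce
  with assms(3) obtain k m where "x $ i = a * of_int k" "\<xi> $ i = b * of_int m"
    unfolding tf_lattice_def by blast
  with assms(1,2) show "fst \<sigma> $ i = a * of_int (tf_lattice_index a b \<sigma> (Inl i))"
    and "snd \<sigma> $ i = b * of_int (tf_lattice_index a b \<sigma> (Inr i))"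
    by (simp_all add: \<sigma> tf_lattice_index_def)
qed

lemma inj_on_tf_lattice_index:
  assumes "a > 0" "b > 0"
  shows "inj_on (tf_lattice_index a b) (tf_lattice a b :: ((real^'n::finite) \<times> (real^'n)) set)"
proof (rule inj_onI)
  fix s t :: "(real^'n) \<times> (real^'n)"
  assume "s \<in> tf_lattice a b" "t \<in> tf_lattice a b" and "tf_lattice_index a b s = tf_lattice_index a b t"
  then have "fst s $ i = fst t $ i \<and> snd s $ i = snd t $ i" for i
    using tf_lattice_component_eq_index[OF assms, of s i] tf_lattice_component_eq_index[OF assms, of t i]
    by metis
  then show "s = t"
    by (simp add: prod_eq_iff vec_eq_iff)
qed

lemma abs_tf_lattice_index_le:
  assumes "a > 0" "b > 0" "\<sigma> \<in> tf_lattice a b"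
  shows "\<bar>real_of_int (tf_lattice_index a b \<sigma> j)\<bar> \<le> norm \<sigma> / a + norm \<sigma> / b"
proof (cases j)
  case (Inl i)
  have "\<bar>real_of_int (tf_lattice_index a b \<sigma> j)\<bar> = \<bar>fst \<sigma> $ i\<bar> / a"
    using tf_lattice_component_eq_index(1)[OF assms, of i] \<open>a > 0\<close> by (simp add: Inl abs_mult)
  also have "\<dots> \<le> norm \<sigma> / a"
    using \<open>a > 0\<close> component_le_norm_cart[of "fst \<sigma>" i] norm_fst_le[of "fst \<sigma>" "snd \<sigma>"]
    by (simp add: divide_right_mono)
  finally show ?thesis
    using \<open>b > 0\<close> by (smt (verit) divide_nonneg_pos norm_ge_zero)
next
  case (Inr i)
  have "\<bar>real_of_int (tf_lattice_index a b \<sigma> j)\<bar> = \<bar>snd \<sigma> $ i\<bar> / b"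
    using tf_lattice_component_eq_index(2)[OF assms, of i] \<open>b > 0\<close> by (simp add: Inr abs_mult)
  also have "\<dots> \<le> norm \<sigma> / b"
    using \<open>b > 0\<close> component_le_norm_cart[of "snd \<sigma>" i] norm_snd_le[of "snd \<sigma>" "fst \<sigma>"]
    by (simp add: divide_right_mono)
  finally show ?thesis
    using \<open>a > 0\<close> by (smt (verit) divide_nonneg_pos norm_ge_zero)
qed

lemma inverse_power_le_prod_tf_lattice_index:
  fixes \<sigma> :: "(real^'n::finite) \<times> (real^'n)"
  assumes "a > 0" "b > 0" "\<sigma> \<in> tf_lattice a b"
  defines "M \<equiv> 1 + 1/a + 1/b"
  shows "inverse ((1 + norm \<sigma>)^(4 * CARD('n)))
           \<le> M^(4 * CARD('n)) * (\<Prod>j\<in>UNIV. inverse ((1 + \<bar>real_of_int (tf_lattice_index a b \<sigma> j)\<bar>)^2))"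
proof -
  let ?d = "4 * CARD('n)" and ?k = "\<lambda>j. real_of_int (tf_lattice_index a b \<sigma> j)"
  have "M \<ge> 1"
    using assms(1,2) by (simp add: M_def)
  have "1 + norm \<sigma> / a + norm \<sigma> / b \<le> M * (1 + norm \<sigma>)"
  proof -
    have "0 \<le> 1 / a" "0 \<le> 1 / b" "0 \<le> norm \<sigma>"
      using assms(1,2) by simp_all
    then show ?thesis
      by (simp add: M_def algebra_simps)
  qed
  then have "1 + \<bar>?k j\<bar> \<le> M * (1 + norm \<sigma>)" for j
    using abs_tf_lattice_index_le[OF assms(1-3), of j] by linarith
  then have "(\<Prod>j\<in>UNIV. (1 + \<bar>?k j\<bar>)^2) \<le> (\<Prod>j\<in>(UNIV::('n + 'n) set). (M * (1 + norm \<sigma>))^2)"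
    by (intro prod_mono conjI power_mono) auto
  also have "\<dots> = (M * (1 + norm \<sigma>))^?d"
    by (simp add: card_UNIV_sum power_mult[symmetric])
  finally have prod_le: "(\<Prod>j\<in>UNIV. (1 + \<bar>?k j\<bar>)^2) \<le> (M * (1 + norm \<sigma>))^?d" .
  have "inverse ((1 + norm \<sigma>)^?d) = M^?d * inverse ((M * (1 + norm \<sigma>))^?d)"
    using \<open>M \<ge> 1\<close> by (simp add: power_mult_distrib)
  also have "\<dots> \<le> M^?d * inverse (\<Prod>j\<in>UNIV. (1 + \<bar>?k j\<bar>)^2)"
    using prod_le \<open>M \<ge> 1\<close>
    by (intro mult_left_mono le_imp_inverse_le prod_pos) (auto intro: add_pos_nonneg)
  also have "\<dots> = M^?d * (\<Prod>j\<in>UNIV. inverse ((1 + \<bar>?k j\<bar>)^2))"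
    using prod_inversef[of "\<lambda>j. (1 + \<bar>?k j\<bar>)^2" UNIV] by (simp add: o_def)
  finally show ?thesis .
qed

lemma summable_on_tf_lattice_inverse_power:
  fixes a b :: real
  assumes "a > 0" "b > 0"
  shows "(\<lambda>\<sigma>::(real^'n::finite) \<times> (real^'n). inverse ((1 + norm \<sigma>)^(4 * CARD('n))))
           summable_on tf_lattice a b"
proof -
  define h where "h q = (\<Prod>j\<in>UNIV. inverse ((1 + \<bar>real_of_int (q j)\<bar>)^2))" for q :: "'n + 'n \<Rightarrow> int"
  define M where "M = 1 + 1/a + 1/b"
  have "h summable_on tf_lattice_index a b ` tf_lattice a b"
    using summable_on_prod_inverse_square_int_funs unfolding h_def
    by (rule summable_on_subset_banach) simp
  then have "(h \<circ> tf_lattice_index a b) summable_on tf_lattice a b"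
    using summable_on_reindex[OF inj_on_tf_lattice_index[OF assms]] by blast
  then have "(\<lambda>\<sigma>. M^(4 * CARD('n)) * h (tf_lattice_index a b \<sigma>)) summable_on tf_lattice a b"
    unfolding o_def by (rule summable_on_cmult_right)
  then show ?thesis
    by (rule summable_on_comparison_test)
      (use inverse_power_le_prod_tf_lattice_index[OF assms] in \<open>auto simp: h_def M_def\<close>)
qed

lemma exp_neg_weight_le_inverse_power:
  assumes "\<omega> t \<ge> a + b * ln (1 + t)" "b > 0" "t \<ge> 0"
  shows "exp (- (real d / b) * \<omega> t) \<le> exp (- (real d / b) * a) * inverse ((1 + t)^d)"
proof -
  have "(real d / b) * (a + b * ln (1 + t)) \<le> (real d / b) * \<omega> t"
    using assms by (intro mult_left_mono) auto
  then have "exp (- (real d / b) * \<omega> t) \<le> exp (- (real d / b) * (a + b * ln (1 + t)))"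
    by simp
  also have "\<dots> = exp (- (real d / b) * a) * exp (- (real d * ln (1 + t)))"
    using assms(2) by (simp add: exp_add[symmetric] field_simps)
  also have "exp (- (real d * ln (1 + t))) = inverse ((1 + t)^d)"
    using assms(3) by (simp add: exp_minus exp_of_nat_mult)
  finally show ?thesis .
qed

lemma bdd_above_if_square_summable_on:
  fixes f :: "'a \<Rightarrow> real"
  assumes "\<And>x. x \<in> S \<Longrightarrow> f x \<ge> 0" and "(\<lambda>x. (f x)\<^sup>2) summable_on S"
  shows "bdd_above (f ` S)"
proof -
  have "f x \<le> sqrt (infsum (\<lambda>x. (f x)\<^sup>2) S)" if "x \<in> S" for x
  proof -
    have "(\<Sum>y\<in>{x}. (f y)\<^sup>2) \<le> infsum (\<lambda>x. (f x)\<^sup>2) S"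
      using assms(2) that by (intro finite_sum_le_infsum) auto
    then show ?thesis
      using assms(1)[OF that] real_le_rsqrt by simp
  qed
  then show ?thesis
    by (auto simp: bdd_above_def)
qed

lemma weighted_square_summable_if_weighted_bdd_above:
  fixes F :: "'a::real_normed_vector \<Rightarrow> real" and \<omega> :: "real \<Rightarrow> real"
  assumes F_nonneg: "\<And>\<sigma>. \<sigma> \<in> S \<Longrightarrow> F \<sigma> \<ge> 0"
    and \<omega>_lower: "\<And>t. t \<ge> 0 \<Longrightarrow> \<omega> t \<ge> a0 + b0 * ln (1 + t)" and "b0 > 0"
    and decay: "(\<lambda>\<sigma>. inverse ((1 + norm \<sigma>)^d)) summable_on S"
    and bdd: "\<forall>l>0. bdd_above ((\<lambda>\<sigma>. exp (l * \<omega> (norm \<sigma>)) * F \<sigma>) ` S)"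
    and "l > 0"
  shows "(\<lambda>\<sigma>. exp (l * \<omega> (norm \<sigma>)) * (F \<sigma>)\<^sup>2) summable_on S"
proof -
  define \<kappa> where "\<kappa> = real d / b0"
  define \<mu> where "\<mu> = (l + \<kappa>) / 2"
  have "\<mu> > 0"
    using \<open>l > 0\<close> \<open>b0 > 0\<close> by (auto simp: \<mu>_def \<kappa>_def intro!: add_pos_nonneg)
  then obtain B where B: "\<And>\<sigma>. \<sigma> \<in> S \<Longrightarrow> exp (\<mu> * \<omega> (norm \<sigma>)) * F \<sigma> \<le> B"
    using bdd unfolding bdd_above_def by fastforce
  have "(\<lambda>\<sigma>. B^2 * exp (- \<kappa> * a0) * inverse ((1 + norm \<sigma>)^d)) summable_on S"
    using decay by (rule summable_on_cmult_right)
  moreover have "exp (l * \<omega> (norm \<sigma>)) * (F \<sigma>)\<^sup>2 \<le> B^2 * exp (- \<kappa> * a0) * inverse ((1 + norm \<sigma>)^d)"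
    if "\<sigma> \<in> S" for \<sigma>
  proof -
    have "exp (l * \<omega> (norm \<sigma>)) * (F \<sigma>)\<^sup>2 = (exp (\<mu> * \<omega> (norm \<sigma>)) * F \<sigma>)^2 * exp (- \<kappa> * \<omega> (norm \<sigma>))"
      by (simp add: \<mu>_def power2_eq_square exp_add[symmetric] field_simps)
    also have "\<dots> \<le> B^2 * (exp (- \<kappa> * a0) * inverse ((1 + norm \<sigma>)^d))"
      using B[OF that] F_nonneg[OF that]
        exp_neg_weight_le_inverse_power[where \<omega> = \<omega> and t = "norm \<sigma>" and a = a0 and b = b0 and d = d]
        \<omega>_lower[of "norm \<sigma>"] \<open>b0 > 0\<close>
      by (intro mult_mono power_mono) (auto simp: \<kappa>_def)
    finally show ?thesis
      by (simp add: mult.assoc)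
  qed
  ultimately show ?thesis
    by (rule summable_on_comparison_test) (auto intro: mult_nonneg_nonneg)
qed

lemma weighted_bdd_above_iff_weighted_square_summable:
  fixes F :: "'a::real_normed_vector \<Rightarrow> real" and \<omega> :: "real \<Rightarrow> real"
  assumes F_nonneg: "\<And>\<sigma>. \<sigma> \<in> S \<Longrightarrow> F \<sigma> \<ge> 0"
    and \<omega>_lower: "\<And>t. t \<ge> 0 \<Longrightarrow> \<omega> t \<ge> a0 + b0 * ln (1 + t)" and "b0 > 0"
    and decay: "(\<lambda>\<sigma>. inverse ((1 + norm \<sigma>)^d)) summable_on S"
  shows "(\<forall>l>0. bdd_above ((\<lambda>\<sigma>. exp (l * \<omega> (norm \<sigma>)) * F \<sigma>) ` S))
     \<longleftrightarrow> (\<forall>l>0. (\<lambda>\<sigma>. exp (l * \<omega> (norm \<sigma>)) * (F \<sigma>)\<^sup>2) summable_on S)"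
proof (intro iffI allI impI)
  fix l :: real
  assume bdd: "\<forall>l>0. bdd_above ((\<lambda>\<sigma>. exp (l * \<omega> (norm \<sigma>)) * F \<sigma>) ` S)" and "l > 0"
  show "(\<lambda>\<sigma>. exp (l * \<omega> (norm \<sigma>)) * (F \<sigma>)\<^sup>2) summable_on S"
    using F_nonneg \<omega>_lower \<open>b0 > 0\<close> decay bdd \<open>l > 0\<close>
    by (rule weighted_square_summable_if_weighted_bdd_above)
next
  fix l :: real
  assume summable: "\<forall>l>0. (\<lambda>\<sigma>. exp (l * \<omega> (norm \<sigma>)) * (F \<sigma>)\<^sup>2) summable_on S" and "l > 0"
  have square: "(exp (l * w) * y)\<^sup>2 = exp ((2 * l) * w) * y\<^sup>2" for w y :: real
    by (simp add: power_mult_distrib mult.assoc exp_double[symmetric])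
  have "(\<lambda>\<sigma>. (exp (l * \<omega> (norm \<sigma>)) * F \<sigma>)\<^sup>2) summable_on S"
    unfolding square using summable[rule_format, of "2 * l"] \<open>l > 0\<close> by simp
  then show "bdd_above ((\<lambda>\<sigma>. exp (l * \<omega> (norm \<sigma>)) * F \<sigma>) ` S)"
    using F_nonneg by (intro bdd_above_if_square_summable_on) auto
qed

theorem lemma2p4:
  fixes \<omega> :: "real \<Rightarrow> real" and U :: "(real^'n::finite \<Rightarrow> complex) \<Rightarrow> complex"
    and \<phi> :: "real^'n \<Rightarrow> complex" and a b :: real and \<Gamma> :: "((real^'n) \<times> (real^'n)) set"
  assumes "nq_weight \<omega>"
    and "U \<in> S'_omega \<omega>"
    and "\<phi> \<in> S_omega \<omega>" and "\<phi> \<noteq> (\<lambda>x. 0)"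
    and "a > 0" and "b > 0"
    and "open \<Gamma>" and "conic \<Gamma>" and "0 \<notin> \<Gamma>"
  shows "(\<forall>l>0. bdd_above ((\<lambda>\<sigma>. exp (l * \<omega> (norm \<sigma>)) * norm (dual_pair U (tf_shift \<sigma> \<phi>)))
                           ` (tf_lattice a b \<inter> \<Gamma>)))
     \<longleftrightarrow> (\<forall>l>0. (\<lambda>\<sigma>. exp (l * \<omega> (norm \<sigma>)) * (norm (dual_pair U (tf_shift \<sigma> \<phi>)))\<^sup>2)
                      summable_on (tf_lattice a b \<inter> \<Gamma>))"
proof -
  from \<open>nq_weight \<omega>\<close> obtain a0 b0
    where "b0 > 0" and \<omega>_lower: "\<And>t. t \<ge> 0 \<Longrightarrow> \<omega> t \<ge> a0 + b0 * ln (1 + t)"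
    unfolding nq_weight_def by blast
  have "(\<lambda>\<sigma>::(real^'n) \<times> (real^'n). inverse ((1 + norm \<sigma>)^(4 * CARD('n))))
          summable_on (tf_lattice a b \<inter> \<Gamma>)"
    using summable_on_tf_lattice_inverse_power[OF \<open>a > 0\<close> \<open>b > 0\<close>]
    by (rule summable_on_subset_banach) simp
  then show ?thesis
    by (intro weighted_bdd_above_iff_weighted_square_summable[OF _ \<omega>_lower \<open>b0 > 0\<close>]) auto
qed

end
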